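(* Let $\lambda_a,\lambda_b\in\{1,2\}$ and let $u,t,v,w$ be integers such that $(u,t)$ satisfies $S_{\lambda_a,\lambda_b}$ and $u\cdot(vw)=t^3+t^{\lambda_a}+1$ (i.e. $u,t,vw$ are, in that order, three consecutive terms of $\langle u,t\rangle_{S_{\lambda_a,\lambda_b}}=\langle t,vw\rangle_{S_{3-\lambda_b,\lambda_a}}$). Then $(v,t)$ satisfies $S_{\lambda_a,\lambda_b}$ (i.e. $v,t,uw$ are, in that order, three consecutive terms of $\langle v,t\rangle_{S_{\lambda_a,\lambda_b}}=\langle t,uw\rangle_{S_{3-\lambda_b,\lambda_a}}$) if and only if $$t\mid (u-v)(u^2+uv+v^2+1)\quad\text{when }\lambda_b=1,$$ $$t\mid (u-v)\big((uw)^2+(uw)(vw)+(vw)^2+1\big)\quad\text{when }\lambda_b=2.$$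
   Context: For $\lambda_a,\lambda_b\in\{1,2\}$, a pair of integers $(x,y)$ satisfies the system $S_{\lambda_a,\lambda_b}$ if $x\mid y^3+y^{\lambda_a}+1$ and $y\mid x^3+x^{\lambda_b}+1$. For such a pair, $\langle x,y\rangle_{S_{\lambda_a,\lambda_b}}$ denotes the bi-infinite integer sequence $(u_n)$ with $u_0=x$, $u_1=y$ and $u_{n-1}u_{n+1}=u_n^3+u_n^{e_n}+1$ for all $n$, where $e_n$ has period 4 with $(e_0,e_1,e_2,e_3)=(\lambda_b,\lambda_a,3-\lambda_b,3-\lambda_a)$; sequences are identified up to shift and reversal of indices. "$u,t,s$, in that order, are three consecutive terms of $\langle u,t\rangle_{S_{\lambda_a,\lambda_b}}$" means $(u,t)$ satisfies $S_{\lambda_a,\lambda_b}$ and $us=t^3+t^{\lambda_a}+1$; then $(t,s)$ satisfies $S_{3-\lambda_b,\lambda_a}$. *)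

theory Defs
  imports Main
begin

definition satisfies_S :: "nat \<Rightarrow> nat \<Rightarrow> int \<Rightarrow> int \<Rightarrow> bool" where
  "satisfies_S la lb x y \<longleftrightarrow> x dvd y ^ 3 + y ^ la + 1 \<and> y dvd x ^ 3 + x ^ lb + 1"

end

theory Submission
  imports Defs
begin

text \<open>Since \<open>t\<close> divides \<open>t\<^sup>3 + t\<^sup>\<lambda>\<^sub>a\<close>, the hypothesis gives \<open>uvw \<equiv> 1 (mod t)\<close>, so \<open>t\<close> is
  coprime to \<open>u\<close> and \<open>v\<close>, and \<open>v\<close> trivially divides \<open>t\<^sup>3 + t\<^sup>\<lambda>\<^sub>a + 1\<close>. Hence \<open>(v, t)\<close> satisfies the
  system iff \<open>t\<close> divides \<open>v\<^sup>3 + v\<^sup>\<lambda>\<^sub>b + 1\<close>. For \<open>\<lambda>\<^sub>b = 1\<close> the given product is the difference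
  \<open>(u\<^sup>3 + u + 1) - (v\<^sup>3 + v + 1)\<close>, whose first term is divisible by \<open>t\<close>. For \<open>\<lambda>\<^sub>b = 2\<close>, multiplying
  the given product by the unit \<open>u\<^sup>2v\<^sup>2\<close> and reducing \<open>(uvw)\<^sup>2 \<equiv> 1\<close> yields
  \<open>u\<^sup>3(v\<^sup>3 + v\<^sup>2 + 1) - v\<^sup>3(u\<^sup>3 + u\<^sup>2 + 1)\<close>, and again the second term is divisible by \<open>t\<close>.\<close>

lemma coprime_if_dvd_mult_minus_one:
  fixes t a b :: "'a::{comm_ring_1, algebraic_semidom}"
  assumes "t dvd a * b - 1"
  shows "coprime t a"
proof (rule coprimeI)
  fix c assume "c dvd t" "c dvd a"
  then have "c dvd a * b - (a * b - 1)"
    using assms by (meson dvd_diff dvd_mult2 dvd_trans)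
  then show "is_unit c" by simp
qed

lemma dvd_cubic_linear_product_iff:
  fixes t u v :: "'a::comm_ring_1"
  assumes "t dvd u ^ 3 + u + 1"
  shows "t dvd (u - v) * (u ^ 2 + u * v + v ^ 2 + 1) \<longleftrightarrow> t dvd v ^ 3 + v + 1"
proof -
  have difference: "(u - v) * (u ^ 2 + u * v + v ^ 2 + 1) = (u ^ 3 + u + 1) - (v ^ 3 + v + 1)"
    by (simp add: algebra_simps power3_eq_cube power2_eq_square)
  show ?thesis
    unfolding difference by (rule dvd_diff_right_iff[OF assms])
qed

lemma cubic_quadratic_product_identity:
  fixes u v w :: "'a::comm_ring_1"
  shows "u ^ 2 * v ^ 2 * ((u - v) * ((u * w) ^ 2 + (u * w) * (v * w) + (v * w) ^ 2 + 1))
    = u ^ 3 * (v ^ 3 + v ^ 2 + 1)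
      + (((u * v * w) ^ 2 - 1) * (u ^ 3 - v ^ 3) - v ^ 3 * (u ^ 3 + u ^ 2 + 1))"
  by (simp add: algebra_simps power3_eq_cube power2_eq_square)

lemma dvd_cubic_quadratic_product_iff:
  fixes t u v w :: "'a::ring_gcd"
  assumes "t dvd u ^ 3 + u ^ 2 + 1" and "t dvd u * v * w - 1"
  shows "t dvd (u - v) * ((u * w) ^ 2 + (u * w) * (v * w) + (v * w) ^ 2 + 1)
    \<longleftrightarrow> t dvd v ^ 3 + v ^ 2 + 1"
    (is "t dvd ?X \<longleftrightarrow> t dvd ?B")
proof -
  have coprime_u: "coprime t u" and coprime_v: "coprime t v"
    using coprime_if_dvd_mult_minus_one[of t u "v * w"]
      coprime_if_dvd_mult_minus_one[of t v "u * w"] assms(2)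
    by (simp_all add: ac_simps)
  have "t dvd (u * v * w) ^ 2 - 1"
    using assms(2) dvd_mult2[of t "u * v * w - 1" "u * v * w + 1"]
    by (simp add: power2_eq_square algebra_simps)
  then have negligible: "t dvd ((u * v * w) ^ 2 - 1) * (u ^ 3 - v ^ 3) - v ^ 3 * (u ^ 3 + u ^ 2 + 1)"
    using assms(1) by (simp add: dvd_diff)
  have "t dvd ?X \<longleftrightarrow> t dvd u ^ 2 * v ^ 2 * ?X"
    using coprime_u coprime_v by (simp add: coprime_dvd_mult_right_iff)
  also have "\<dots> \<longleftrightarrow> t dvd u ^ 3 * ?B"
    unfolding cubic_quadratic_product_identity by (rule dvd_add_left_iff[OF negligible])
  also have "\<dots> \<longleftrightarrow> t dvd ?B"
    using coprime_u by (simp add: coprime_dvd_mult_right_iff)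
  finally show ?thesis .
qed

theorem theorem11:
  fixes la lb :: nat and u t v w :: int
  assumes "la \<in> {1, 2}" and "lb \<in> {1, 2}"
    and "satisfies_S la lb u t"
    and "u * (v * w) = t ^ 3 + t ^ la + 1"
  shows "satisfies_S la lb v t \<longleftrightarrow>
    (if lb = 1 then t dvd (u - v) * (u ^ 2 + u * v + v ^ 2 + 1)
     else t dvd (u - v) * ((u * w) ^ 2 + (u * w) * (v * w) + (v * w) ^ 2 + 1))"
proof -
  have "v dvd t ^ 3 + t ^ la + 1"
    using assms(4) by (metis dvd_triv_left mult.left_commute)
  then have reduced: "satisfies_S la lb v t \<longleftrightarrow> t dvd v ^ 3 + v ^ lb + 1"
    by (simp add: satisfies_S_def)
  have t_dvd_u: "t dvd u ^ 3 + u ^ lb + 1"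
    using assms(3) by (simp add: satisfies_S_def)
  have "t dvd t ^ 3 + t ^ la"
    using assms(1) by auto
  then have "t dvd u * v * w - 1"
    using assms(4) by (simp add: ac_simps)
  then show ?thesis
    using assms(2) reduced t_dvd_u
      dvd_cubic_linear_product_iff[of t u v] dvd_cubic_quadratic_product_iff[of t u v w]
    by auto
qed

end
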